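(* Let $M=\langle W,\leq,R,V\rangle$ be a brIML1-model, let $\gamma$ be a formula such that $w\nVdash\gamma$ for some $w\in W$, and let $\Sigma$ be the set of all subformulas of $\gamma$. Then the filtered frame $F_\Sigma=\langle W_\Sigma,\leq_\Sigma,R_\Sigma\rangle$ is a (well-defined) brIML1-frame.
   Context: Formulas are built from a denumerable set $PV$ of propositional variables and $\bot$ using $\land,\lor,\rightarrow$ and unary $\Delta$. A brIML1-frame is a triple $\langle W,\leq,R\rangle$, $W$ non-empty, $\leq$ a partial order on $W$, $R$ a binary relation with (1) $w\leq v\Rightarrow wRv$ and (2) ($w\leq v$ and $vRu$) $\Rightarrow wRu$. A brIML1-model adds $V:PV\to P(W)$ upward closed under $\leq$; forcing: atoms via $V$, $\bot$ never, $\land,\lor$ pointwise, $w\Vdash\varphi\rightarrow\psi$ iff every $v\geq w$ has $v\nVdash\varphi$ or $v\Vdash\psi$, $w\Vdash\Delta\varphi$ iff every $v$ with $wRv$ has $v\Vdash\varphi$. Filtration: $w\sim v$ iff $w$ and $v$ force the same formulas of $\Sigma$; $[w]$ is the class of $w$; $W_\Sigma=\{[w]:w\in W\}$; $[w]\leq_\Sigma[v]$ iff for every $\alpha\in\Sigma$, $w\Vdash\alpha$ implies $v\Vdash\alpha$; $[w]R_\Sigma[v]$ iff for every formula $\Delta\beta\in\Sigma$, $w\Vdash\Delta\beta$ implies $v\Vdash\beta$. *)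

theory Defs
  imports Main
begin

datatype fm = Var nat | Bot | And fm fm | Or fm fm | Imp fm fm | Delta fm

definition brIML1_frame :: "'w set \<Rightarrow> ('w \<Rightarrow> 'w \<Rightarrow> bool) \<Rightarrow> ('w \<Rightarrow> 'w \<Rightarrow> bool) \<Rightarrow> bool" where
  "brIML1_frame W le R \<longleftrightarrow>
     W \<noteq> {} \<and>
     (\<forall>w\<in>W. le w w) \<and>
     (\<forall>w\<in>W. \<forall>v\<in>W. le w v \<and> le v w \<longrightarrow> w = v) \<and>
     (\<forall>w\<in>W. \<forall>v\<in>W. \<forall>u\<in>W. le w v \<and> le v u \<longrightarrow> le w u) \<and>
     (\<forall>w\<in>W. \<forall>v\<in>W. le w v \<longrightarrow> R w v) \<and>
     (\<forall>w\<in>W. \<forall>v\<in>W. \<forall>u\<in>W. le w v \<and> R v u \<longrightarrow> R w u)"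

definition brIML1_model :: "'w set \<Rightarrow> ('w \<Rightarrow> 'w \<Rightarrow> bool) \<Rightarrow> ('w \<Rightarrow> 'w \<Rightarrow> bool) \<Rightarrow> (nat \<Rightarrow> 'w set) \<Rightarrow> bool" where
  "brIML1_model W le R V \<longleftrightarrow>
     brIML1_frame W le R \<and>
     (\<forall>p. V p \<subseteq> W) \<and>
     (\<forall>p. \<forall>w\<in>W. \<forall>v\<in>W. le w v \<and> w \<in> V p \<longrightarrow> v \<in> V p)"

primrec forces :: "'w set \<Rightarrow> ('w \<Rightarrow> 'w \<Rightarrow> bool) \<Rightarrow> ('w \<Rightarrow> 'w \<Rightarrow> bool) \<Rightarrow> (nat \<Rightarrow> 'w set) \<Rightarrow> 'w \<Rightarrow> fm \<Rightarrow> bool" where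
  "forces W le R V w (Var p) = (w \<in> V p)"
| "forces W le R V w Bot = False"
| "forces W le R V w (And a b) = (forces W le R V w a \<and> forces W le R V w b)"
| "forces W le R V w (Or a b) = (forces W le R V w a \<or> forces W le R V w b)"
| "forces W le R V w (Imp a b) =
     (\<forall>v\<in>W. le w v \<longrightarrow> \<not> forces W le R V v a \<or> forces W le R V v b)"
| "forces W le R V w (Delta a) = (\<forall>v\<in>W. R w v \<longrightarrow> forces W le R V v a)"

primrec subformulas :: "fm \<Rightarrow> fm set" where
  "subformulas (Var p) = {Var p}"
| "subformulas Bot = {Bot}"
| "subformulas (And a b) = insert (And a b) (subformulas a \<union> subformulas b)"
| "subformulas (Or a b) = insert (Or a b) (subformulas a \<union> subformulas b)"
| "subformulas (Imp a b) = insert (Imp a b) (subformulas a \<union> subformulas b)"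
| "subformulas (Delta a) = insert (Delta a) (subformulas a)"

definition fclass :: "'w set \<Rightarrow> ('w \<Rightarrow> 'w \<Rightarrow> bool) \<Rightarrow> ('w \<Rightarrow> 'w \<Rightarrow> bool) \<Rightarrow> (nat \<Rightarrow> 'w set) \<Rightarrow> fm set \<Rightarrow> 'w \<Rightarrow> 'w set" where
  "fclass W le R V \<Sigma> w =
     {v \<in> W. \<forall>\<alpha>\<in>\<Sigma>. forces W le R V w \<alpha> \<longleftrightarrow> forces W le R V v \<alpha>}"

definition fW :: "'w set \<Rightarrow> ('w \<Rightarrow> 'w \<Rightarrow> bool) \<Rightarrow> ('w \<Rightarrow> 'w \<Rightarrow> bool) \<Rightarrow> (nat \<Rightarrow> 'w set) \<Rightarrow> fm set \<Rightarrow> 'w set set" where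
  "fW W le R V \<Sigma> = fclass W le R V \<Sigma> ` W"

definition fle :: "'w set \<Rightarrow> ('w \<Rightarrow> 'w \<Rightarrow> bool) \<Rightarrow> ('w \<Rightarrow> 'w \<Rightarrow> bool) \<Rightarrow> (nat \<Rightarrow> 'w set) \<Rightarrow> fm set \<Rightarrow> 'w set \<Rightarrow> 'w set \<Rightarrow> bool" where
  "fle W le R V \<Sigma> X Y \<longleftrightarrow>
     (\<exists>w\<in>W. \<exists>v\<in>W. X = fclass W le R V \<Sigma> w \<and> Y = fclass W le R V \<Sigma> v \<and>
        (\<forall>\<alpha>\<in>\<Sigma>. forces W le R V w \<alpha> \<longrightarrow> forces W le R V v \<alpha>))"

definition fR :: "'w set \<Rightarrow> ('w \<Rightarrow> 'w \<Rightarrow> bool) \<Rightarrow> ('w \<Rightarrow> 'w \<Rightarrow> bool) \<Rightarrow> (nat \<Rightarrow> 'w set) \<Rightarrow> fm set \<Rightarrow> 'w set \<Rightarrow> 'w set \<Rightarrow> bool" where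
  "fR W le R V \<Sigma> X Y \<longleftrightarrow>
     (\<exists>w\<in>W. \<exists>v\<in>W. X = fclass W le R V \<Sigma> w \<and> Y = fclass W le R V \<Sigma> v \<and>
        (\<forall>\<beta>. Delta \<beta> \<in> \<Sigma> \<longrightarrow> forces W le R V w (Delta \<beta>) \<longrightarrow> forces W le R V v \<beta>))"

end

theory Submission
  imports Defs
begin

text \<open>The filtered relations do not depend on the representatives chosen for the
  classes, so every frame condition on classes reduces to the corresponding condition on
  worlds of \<open>M\<close>. For \<open>R\<^sub>\<Sigma>\<close> this independence needs \<open>\<beta> \<in> \<Sigma>\<close> whenever
  \<open>\<Delta>\<beta> \<in> \<Sigma>\<close>, which is where the subformula closure of \<open>\<Sigma>\<close> enters. Reflexivity of
  \<open>\<le>\<close> makes \<open>R\<close> reflexive, so \<open>w \<Vdash> \<Delta>\<beta>\<close> implies \<open>w \<Vdash> \<beta>\<close>; this gives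
  \<open>\<le>\<^sub>\<Sigma> \<subseteq> R\<^sub>\<Sigma>\<close>.\<close>

lemma subformulas_self: "\<gamma> \<in> subformulas \<gamma>"
  by (cases \<gamma>) auto

lemma subformulas_Delta_closed: "Delta \<beta> \<in> subformulas \<gamma> \<Longrightarrow> \<beta> \<in> subformulas \<gamma>"
  by (induction \<gamma>) (auto simp: subformulas_self)

lemma fclass_eq_iff:
  assumes "v \<in> W"
  shows "fclass W le R V S w = fclass W le R V S v \<longleftrightarrow>
           (\<forall>\<alpha>\<in>S. forces W le R V w \<alpha> = forces W le R V v \<alpha>)"
proof
  assume "fclass W le R V S w = fclass W le R V S v"
  moreover have "v \<in> fclass W le R V S v" using assms by (simp add: fclass_def)
  ultimately have "v \<in> fclass W le R V S w" by simp
  then show "\<forall>\<alpha>\<in>S. forces W le R V w \<alpha> = forces W le R V v \<alpha>"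
    by (simp add: fclass_def)
qed (auto simp: fclass_def)

lemma fle_fclass_iff:
  assumes "w \<in> W" "v \<in> W"
  shows "fle W le R V S (fclass W le R V S w) (fclass W le R V S v) \<longleftrightarrow>
           (\<forall>\<alpha>\<in>S. forces W le R V w \<alpha> \<longrightarrow> forces W le R V v \<alpha>)"
  using assms unfolding fle_def by (auto simp: fclass_eq_iff)

lemma fR_fclass_iff:
  assumes "w \<in> W" "v \<in> W" and closed: "\<And>\<beta>. Delta \<beta> \<in> S \<Longrightarrow> \<beta> \<in> S"
  shows "fR W le R V S (fclass W le R V S w) (fclass W le R V S v) \<longleftrightarrow>
           (\<forall>\<beta>. Delta \<beta> \<in> S \<longrightarrow> forces W le R V w (Delta \<beta>) \<longrightarrow> forces W le R V v \<beta>)"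
  using assms unfolding fR_def by (auto simp: fclass_eq_iff)

lemma brIML1_frame_filtration:
  assumes frame: "brIML1_frame W le R" and closed: "\<And>\<beta>. Delta \<beta> \<in> S \<Longrightarrow> \<beta> \<in> S"
  shows "brIML1_frame (fW W le R V S) (fle W le R V S) (fR W le R V S)"
proof -
  let ?c = "fclass W le R V S"
  let ?forces = "forces W le R V"
  note fle_iff = fle_fclass_iff[of _ W _ le R V S]
  note fR_iff = fR_fclass_iff[of _ W _ S le R V, OF _ _ closed]
  have le_refl: "\<forall>w\<in>W. le w w" using frame unfolding brIML1_frame_def by (elim conjE)
  have le_imp_R: "\<forall>w\<in>W. \<forall>v\<in>W. le w v \<longrightarrow> R w v"
    using frame unfolding brIML1_frame_def by (elim conjE)
  have nonempty: "W \<noteq> {}" using frame unfolding brIML1_frame_def by (elim conjE)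
  have refl: "\<forall>w\<in>W. fle W le R V S (?c w) (?c w)"
    by (simp add: fle_iff)
  have antisym: "\<forall>w\<in>W. \<forall>v\<in>W. fle W le R V S (?c w) (?c v) \<and> fle W le R V S (?c v) (?c w)
      \<longrightarrow> ?c w = ?c v"
    by (auto simp: fle_iff fclass_eq_iff)
  have trans: "\<forall>w\<in>W. \<forall>v\<in>W. \<forall>u\<in>W. fle W le R V S (?c w) (?c v) \<and> fle W le R V S (?c v) (?c u)
      \<longrightarrow> fle W le R V S (?c w) (?c u)"
    by (auto simp: fle_iff)
  have le_R: "\<forall>w\<in>W. \<forall>v\<in>W. fle W le R V S (?c w) (?c v) \<longrightarrow> fR W le R V S (?c w) (?c v)"
  proof (intro ballI impI)
    fix w v assume "w \<in> W" "v \<in> W" "fle W le R V S (?c w) (?c v)"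
    then have "\<forall>\<alpha>\<in>S. ?forces w \<alpha> \<longrightarrow> ?forces v \<alpha>" by (simp add: fle_iff)
    moreover have "?forces v (Delta \<beta>) \<Longrightarrow> ?forces v \<beta>" for \<beta>
      using \<open>v \<in> W\<close> le_refl le_imp_R by simp
    ultimately show "fR W le R V S (?c w) (?c v)"
      using \<open>w \<in> W\<close> \<open>v \<in> W\<close> by (simp add: fR_iff del: forces.simps)
  qed
  have le_R_R: "\<forall>w\<in>W. \<forall>v\<in>W. \<forall>u\<in>W. fle W le R V S (?c w) (?c v) \<and> fR W le R V S (?c v) (?c u)
      \<longrightarrow> fR W le R V S (?c w) (?c u)"
    by (auto simp: fle_iff fR_iff simp del: forces.simps)
  show ?thesis
    unfolding brIML1_frame_def fW_def ball_simps(9) image_is_empty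
    by (intro conjI nonempty refl antisym trans le_R le_R_R)
qed

theorem theorem5p3:
  fixes W :: "'w set" and le R :: "'w \<Rightarrow> 'w \<Rightarrow> bool" and V :: "nat \<Rightarrow> 'w set"
    and \<gamma> :: fm and w :: 'w
  assumes "brIML1_model W le R V"
    and "w \<in> W" and "\<not> forces W le R V w \<gamma>"
  shows "brIML1_frame (fW W le R V (subformulas \<gamma>))
           (fle W le R V (subformulas \<gamma>)) (fR W le R V (subformulas \<gamma>))"
proof -
  have "brIML1_frame W le R" using assms(1) unfolding brIML1_model_def by (elim conjE)
  then show ?thesis by (rule brIML1_frame_filtration) (rule subformulas_Delta_closed)
qed

end
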